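(* The join $\mathsf V(M_2)\vee\mathbf N$ is the unique maximal (proper) subvariety of $\mathsf V(S_7)$: it is a proper subvariety, and every proper subvariety of $\mathsf V(S_7)$ is contained in it.
   Context: $S_7$ is the ai-semiring on $\{\infty,a,1\}$ with $x+x=x$, $x+y=\infty$ for $x\neq y$, and commutative multiplication with $\infty$ a zero, $a\cdot a=\infty$, $a\cdot 1=a$, $1\cdot1=1$; $\mathsf V(S_7)$ is the variety it generates. $M_2$ is the two-element ai-semiring $\{1,\infty\}$ with $1+\infty=\infty$, $x+x=x$, $1\cdot1=1$ and $\infty$ a multiplicative zero. $\mathbf N$ is the subvariety of $\mathsf V(S_7)$ defined by $x^2y\approx x^2$. $\mathcal V_1\vee\mathcal V_2$ denotes the smallest variety containing both. *)

theory Defs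
  imports Main
begin

datatype trm = V nat | Plus trm trm | Times trm trm

type_synonym identity = "trm \<times> trm"

fun eval :: "('a \<Rightarrow> 'a \<Rightarrow> 'a) \<Rightarrow> ('a \<Rightarrow> 'a \<Rightarrow> 'a) \<Rightarrow> (nat \<Rightarrow> 'a) \<Rightarrow> trm \<Rightarrow> 'a" where
  "eval ad mu \<sigma> (V n) = \<sigma> n"
| "eval ad mu \<sigma> (Plus s t) = ad (eval ad mu \<sigma> s) (eval ad mu \<sigma> t)"
| "eval ad mu \<sigma> (Times s t) = mu (eval ad mu \<sigma> s) (eval ad mu \<sigma> t)"

fun subst :: "(nat \<Rightarrow> trm) \<Rightarrow> trm \<Rightarrow> trm" where
  "subst \<tau> (V n) = \<tau> n"
| "subst \<tau> (Plus s t) = Plus (subst \<tau> s) (subst \<tau> t)"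
| "subst \<tau> (Times s t) = Times (subst \<tau> s) (subst \<tau> t)"

definition Id_alg :: "('a \<Rightarrow> 'a \<Rightarrow> 'a) \<Rightarrow> ('a \<Rightarrow> 'a \<Rightarrow> 'a) \<Rightarrow> identity set" where
  "Id_alg ad mu = {(s, t). \<forall>\<sigma>. eval ad mu \<sigma> s = eval ad mu \<sigma> t}"

text \<open>By Birkhoff's
  theorem, subvarieties of a variety V correspond (order-reversingly) to the
  equational theories containing Id(V).\<close>
definition eq_theory :: "identity set \<Rightarrow> bool" where
  "eq_theory T \<longleftrightarrow>
     (\<forall>t. (t, t) \<in> T) \<and>
     (\<forall>s t. (s, t) \<in> T \<longrightarrow> (t, s) \<in> T) \<and>
     (\<forall>s t u. (s, t) \<in> T \<longrightarrow> (t, u) \<in> T \<longrightarrow> (s, u) \<in> T) \<and>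
     (\<forall>s t s' t'. (s, t) \<in> T \<longrightarrow> (s', t') \<in> T \<longrightarrow>
        (Plus s s', Plus t t') \<in> T \<and> (Times s s', Times t t') \<in> T) \<and>
     (\<forall>s t \<tau>. (s, t) \<in> T \<longrightarrow> (subst \<tau> s, subst \<tau> t) \<in> T)"

text \<open>The equational theory generated by a set of identities
  (= Id of the variety defined by these identities).\<close>
definition eq_closure :: "identity set \<Rightarrow> identity set" where
  "eq_closure E = \<Inter>{T. eq_theory T \<and> E \<subseteq> T}"

datatype s7 = Inf7 | A7 | One7

fun add7 :: "s7 \<Rightarrow> s7 \<Rightarrow> s7" where
  "add7 x y = (if x = y then x else Inf7)"

fun mul7 :: "s7 \<Rightarrow> s7 \<Rightarrow> s7" where
  "mul7 Inf7 y = Inf7"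
| "mul7 x Inf7 = Inf7"
| "mul7 A7 A7 = Inf7"
| "mul7 A7 One7 = A7"
| "mul7 One7 A7 = A7"
| "mul7 One7 One7 = One7"

datatype m2 = One2 | Inf2

fun add2 :: "m2 \<Rightarrow> m2 \<Rightarrow> m2" where
  "add2 One2 One2 = One2"
| "add2 _ _ = Inf2"

fun mul2 :: "m2 \<Rightarrow> m2 \<Rightarrow> m2" where
  "mul2 One2 One2 = One2"
| "mul2 _ _ = Inf2"

text \<open>Id(V(S_7)) = Id(S_7), Id(V(M_2)) = Id(M_2).\<close>
definition Th_S7 :: "identity set" where "Th_S7 = Id_alg add7 mul7"
definition Th_M2 :: "identity set" where "Th_M2 = Id_alg add2 mul2"

definition Th_N :: "identity set" where
  "Th_N = eq_closure (Th_S7 \<union> {(Times (Times (V 0) (V 0)) (V 1), Times (V 0) (V 0))})"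

text \<open>Id(V_1 \<or> V_2) = Id(V_1) \<inter> Id(V_2).\<close>
definition Th_join :: "identity set" where "Th_join = Th_M2 \<inter> Th_N"

end

theory Submission
  imports Defs
begin

text \<open>Every identity \<open>P \<approx> Q\<close> of \<open>V(M\<^sub>2) \<or> N\<close> has the same variables on both sides
  (because of \<open>M\<^sub>2\<close>) and holds in a quotient \<open>B\<close> of a subalgebra of \<open>S\<^sub>7\<^sup>\<nat>\<close> that
  satisfies \<open>x\<^sup>2y \<approx> x\<^sup>2\<close> (because of \<open>N\<close>). Evaluating in \<open>B\<close> at vectors built from
  witnesses shows: either \<open>P \<approx> Q\<close> holds in \<open>S\<^sub>7\<close>, or both sides are collapsing,
  i.e. \<open>P \<approx> x\<^sup>2P\<close> in \<open>S\<^sub>7\<close> for a variable \<open>x\<close> of \<open>P\<close> (and likewise for \<open>Q\<close>).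

  Conversely, an identity failing in \<open>S\<^sub>7\<close> fails at some valuation into \<open>{1, a}\<close>;
  substituting \<open>y\<close> for the variables valued \<open>a\<close> and \<open>x\<close> for the others and multiplying
  by \<open>x\<^sup>2\<close> turns it into an identity between two distinct terms among \<open>x\<^sup>2, x\<^sup>2y, x\<^sup>2y\<^sup>2\<close>,
  and each of these yields \<open>x\<^sup>2y \<approx> x\<^sup>2y\<^sup>2\<close>. With that identity a collapsing \<open>P\<close> becomes
  \<open>x\<^sup>2P \<approx> x\<^sup>2P\<^sup>2\<close>, whose value only depends on whether all variables of \<open>P\<close> are \<open>1\<close>,
  so any two collapsing terms with the same variables are identified. Properness is
  witnessed by \<open>x\<^sup>2y + x\<^sup>2 \<approx> x\<^sup>2y\<close>.\<close>

lemma eq_theory_refl: "eq_theory T \<Longrightarrow> (t, t) \<in> T"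
  and eq_theory_sym: "eq_theory T \<Longrightarrow> (s, t) \<in> T \<Longrightarrow> (t, s) \<in> T"
  and eq_theory_trans: "eq_theory T \<Longrightarrow> (s, t) \<in> T \<Longrightarrow> (t, u) \<in> T \<Longrightarrow> (s, u) \<in> T"
  and eq_theory_Plus: "eq_theory T \<Longrightarrow> (s, t) \<in> T \<Longrightarrow> (s', t') \<in> T \<Longrightarrow> (Plus s s', Plus t t') \<in> T"
  and eq_theory_Times: "eq_theory T \<Longrightarrow> (s, t) \<in> T \<Longrightarrow> (s', t') \<in> T \<Longrightarrow> (Times s s', Times t t') \<in> T"
  and eq_theory_subst: "eq_theory T \<Longrightarrow> (s, t) \<in> T \<Longrightarrow> (subst \<tau> s, subst \<tau> t) \<in> T"
  unfolding eq_theory_def by blast+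

lemma eq_theory_Inter: "(\<And>T. T \<in> F \<Longrightarrow> eq_theory T) \<Longrightarrow> eq_theory (\<Inter>F)"
  unfolding eq_theory_def Inter_iff by (intro conjI allI impI ballI; metis)

lemma eq_theory_Int: "eq_theory A \<Longrightarrow> eq_theory B \<Longrightarrow> eq_theory (A \<inter> B)"
  using eq_theory_Inter[of "{A, B}"] by auto

lemma eq_theory_eq_closure: "eq_theory (eq_closure E)"
  unfolding eq_closure_def by (rule eq_theory_Inter) auto

lemma eq_closure_subset: "E \<subseteq> eq_closure E"
  unfolding eq_closure_def by auto

lemma eq_closure_least: "eq_theory T \<Longrightarrow> E \<subseteq> T \<Longrightarrow> eq_closure E \<subseteq> T"
  unfolding eq_closure_def by auto

fun vars :: "trm \<Rightarrow> nat set" where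
  "vars (V n) = {n}"
| "vars (Plus s t) = vars s \<union> vars t"
| "vars (Times s t) = vars s \<union> vars t"

lemma finite_vars: "finite (vars t)"
  by (induction t) auto

lemma eval_cong: "(\<And>n. n \<in> vars t \<Longrightarrow> \<sigma> n = \<sigma>' n) \<Longrightarrow> eval ad mu \<sigma> t = eval ad mu \<sigma>' t"
  by (induction t) auto

lemma eval_subst: "eval ad mu \<sigma> (subst \<tau> t) = eval ad mu (\<lambda>n. eval ad mu \<sigma> (\<tau> n)) t"
  by (induction t) auto

definition subalg :: "'a set \<Rightarrow> ('a \<Rightarrow> 'a \<Rightarrow> 'a) \<Rightarrow> ('a \<Rightarrow> 'a \<Rightarrow> 'a) \<Rightarrow> bool" where
  "subalg C ad mu \<longleftrightarrow> (\<forall>x\<in>C. \<forall>y\<in>C. ad x y \<in> C \<and> mu x y \<in> C)"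

lemma subalg_UNIV: "subalg UNIV ad mu"
  by (simp add: subalg_def)

definition hom_on :: "'a set \<Rightarrow> ('a \<Rightarrow> 'a \<Rightarrow> 'a) \<Rightarrow> ('a \<Rightarrow> 'a \<Rightarrow> 'a) \<Rightarrow>
    ('b \<Rightarrow> 'b \<Rightarrow> 'b) \<Rightarrow> ('b \<Rightarrow> 'b \<Rightarrow> 'b) \<Rightarrow> ('a \<Rightarrow> 'b) \<Rightarrow> bool" where
  "hom_on C ad mu ad' mu' h \<longleftrightarrow>
     (\<forall>x\<in>C. \<forall>y\<in>C. h (ad x y) = ad' (h x) (h y) \<and> h (mu x y) = mu' (h x) (h y))"

definition Id_alg_on :: "'a set \<Rightarrow> ('a \<Rightarrow> 'a \<Rightarrow> 'a) \<Rightarrow> ('a \<Rightarrow> 'a \<Rightarrow> 'a) \<Rightarrow> identity set" where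
  "Id_alg_on C ad mu = {(s, t). \<forall>\<sigma>. range \<sigma> \<subseteq> C \<longrightarrow> eval ad mu \<sigma> s = eval ad mu \<sigma> t}"

lemma Id_alg_eq_Id_alg_on_UNIV: "Id_alg ad mu = Id_alg_on UNIV ad mu"
  unfolding Id_alg_def Id_alg_on_def by simp

lemma Id_alg_on_antimono: "C \<subseteq> D \<Longrightarrow> Id_alg_on D ad mu \<subseteq> Id_alg_on C ad mu"
  unfolding Id_alg_on_def by blast

lemma eval_in_subalg:
  "subalg C ad mu \<Longrightarrow> (\<And>n. n \<in> vars t \<Longrightarrow> \<sigma> n \<in> C) \<Longrightarrow> eval ad mu \<sigma> t \<in> C"
  unfolding subalg_def by (induction t) auto

lemma eq_theory_Id_alg_on:
  assumes "subalg C ad mu"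
  shows "eq_theory (Id_alg_on C ad mu)"
proof -
  have "(subst \<tau> s, subst \<tau> t) \<in> Id_alg_on C ad mu"
    if "(s, t) \<in> Id_alg_on C ad mu" for s t \<tau>
  proof -
    have "range (\<lambda>n. eval ad mu \<sigma> (\<tau> n)) \<subseteq> C" if "range \<sigma> \<subseteq> C" for \<sigma>
      using eval_in_subalg[OF assms] that by blast
    then show ?thesis
      using that unfolding Id_alg_on_def by (simp add: eval_subst)
  qed
  then show ?thesis
    unfolding eq_theory_def by (auto simp: Id_alg_on_def)
qed

lemma eval_hom_on:
  assumes "subalg C ad mu" "hom_on C ad mu ad' mu' h" "\<And>n. n \<in> vars t \<Longrightarrow> \<sigma> n \<in> C"
  shows "h (eval ad mu \<sigma> t) = eval ad' mu' (h \<circ> \<sigma>) t"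
  using assms(3)
proof (induction t)
  case (Plus s t)
  then show ?case
    using assms(2) eval_in_subalg[OF assms(1), of s \<sigma>] eval_in_subalg[OF assms(1), of t \<sigma>]
    by (simp add: hom_on_def)
next
  case (Times s t)
  then show ?case
    using assms(2) eval_in_subalg[OF assms(1), of s \<sigma>] eval_in_subalg[OF assms(1), of t \<sigma>]
    by (simp add: hom_on_def)
qed simp

lemma hom_on_eval_eq:
  assumes "subalg C ad mu" "hom_on C ad mu ad' mu' h" "h ` C \<subseteq> D"
    and "(s, t) \<in> Id_alg_on D ad' mu'" "range \<sigma> \<subseteq> C"
  shows "h (eval ad mu \<sigma> s) = h (eval ad mu \<sigma> t)"
  using assms eval_hom_on[OF assms(1,2)] unfolding Id_alg_on_def by (fastforce simp: image_subset_iff)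

lemma Id_alg_on_hom_image:
  assumes "subalg C ad mu" "hom_on C ad mu ad' mu' h" "D \<subseteq> h ` C"
  shows "Id_alg_on C ad mu \<subseteq> Id_alg_on D ad' mu'"
  unfolding Id_alg_on_def
proof clarify
  fix s t and \<sigma>' :: "nat \<Rightarrow> 'b"
  assume st: "\<forall>\<sigma>. range \<sigma> \<subseteq> C \<longrightarrow> eval ad mu \<sigma> s = eval ad mu \<sigma> t" and "range \<sigma>' \<subseteq> D"
  then have lift: "\<sigma>' n \<in> h ` C" for n
    using assms(3) by blast
  define \<sigma> where "\<sigma> n = inv_into C h (\<sigma>' n)" for n
  have \<sigma>C: "range \<sigma> \<subseteq> C" and \<sigma>': "h \<circ> \<sigma> = \<sigma>'"
    using lift by (auto simp: \<sigma>_def inv_into_into f_inv_into_f)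
  show "eval ad' mu' \<sigma>' s = eval ad' mu' \<sigma>' t"
    using eval_hom_on[OF assms(1,2)] st \<sigma>C unfolding \<sigma>'[symmetric] by (metis range_subsetD)
qed

definition pw :: "('a \<Rightarrow> 'a \<Rightarrow> 'a) \<Rightarrow> ('i \<Rightarrow> 'a) \<Rightarrow> ('i \<Rightarrow> 'a) \<Rightarrow> 'i \<Rightarrow> 'a" where
  "pw f u v = (\<lambda>i. f (u i) (v i))"

lemma eval_pw: "eval (pw ad) (pw mu) \<sigma> t i = eval ad mu (\<lambda>n. \<sigma> n i) t"
  by (induction t) (simp_all add: pw_def)

lemma Id_alg_subset_Id_alg_pw: "Id_alg ad mu \<subseteq> Id_alg (pw ad) (pw mu)"
  unfolding Id_alg_def by (auto simp: eval_pw)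

abbreviation eval7 :: "(nat \<Rightarrow> s7) \<Rightarrow> trm \<Rightarrow> s7" where "eval7 \<equiv> eval add7 mul7"
abbreviation eval2 :: "(nat \<Rightarrow> m2) \<Rightarrow> trm \<Rightarrow> m2" where "eval2 \<equiv> eval add2 mul2"

lemma Th_S7_iff: "(s, t) \<in> Th_S7 \<longleftrightarrow> (\<forall>\<sigma>. eval7 \<sigma> s = eval7 \<sigma> t)"
  unfolding Th_S7_def Id_alg_def by simp

lemma Th_M2_iff: "(s, t) \<in> Th_M2 \<longleftrightarrow> (\<forall>\<sigma>. eval2 \<sigma> s = eval2 \<sigma> t)"
  unfolding Th_M2_def Id_alg_def by simp

lemma add7_eq_One7_iff: "add7 x y = One7 \<longleftrightarrow> x = One7 \<and> y = One7"
  by auto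

lemma mul7_eq_One7_iff: "mul7 x y = One7 \<longleftrightarrow> x = One7 \<and> y = One7"
  by (cases x; cases y) auto

lemma mul7_Inf7 [simp]: "mul7 x Inf7 = Inf7" "mul7 Inf7 x = Inf7"
  by (cases x; simp)+

lemma mul7_One7 [simp]: "mul7 One7 x = x" "mul7 x One7 = x"
  by (cases x; simp)+

lemma mul7_self: "x \<noteq> One7 \<Longrightarrow> mul7 x x = Inf7"
  by (cases x) auto

lemma add7_Inf7 [simp]: "add7 x Inf7 = Inf7" "add7 Inf7 x = Inf7"
  by auto

declare add7.simps [simp del]

lemma add7_self [simp]: "add7 x x = x"
  by (simp add: add7.simps)

lemma add7_neq: "x \<noteq> y \<Longrightarrow> add7 x y = Inf7"
  by (simp add: add7.simps)

lemma eval7_eq_One7_iff: "eval7 \<sigma> t = One7 \<longleftrightarrow> (\<forall>n\<in>vars t. \<sigma> n = One7)"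
  by (induction t) (auto simp: add7_eq_One7_iff mul7_eq_One7_iff add7.simps)

lemma eval7_Inf7: "n \<in> vars t \<Longrightarrow> \<sigma> n = Inf7 \<Longrightarrow> eval7 \<sigma> t = Inf7"
  by (induction t) auto

lemma eval2_eq_Inf2_iff: "eval2 \<sigma> t = Inf2 \<longleftrightarrow> (\<exists>n\<in>vars t. \<sigma> n = Inf2)"
proof -
  have "add2 x y = Inf2 \<longleftrightarrow> x = Inf2 \<or> y = Inf2" "mul2 x y = Inf2 \<longleftrightarrow> x = Inf2 \<or> y = Inf2" for x y
    by (cases x; cases y; simp)+
  then show ?thesis
    by (induction t) auto
qed

lemma Th_M2_vars_eq:
  assumes "(s, t) \<in> Th_M2"
  shows "vars s = vars t"
proof (rule ccontr)
  assume "vars s \<noteq> vars t"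
  then obtain z where "z \<in> vars s \<longleftrightarrow> z \<notin> vars t"
    by blast
  moreover have "eval2 (\<lambda>n. if n = z then Inf2 else One2) u = Inf2 \<longleftrightarrow> z \<in> vars u" for u
    by (auto simp: eval2_eq_Inf2_iff)
  ultimately have "eval2 (\<lambda>n. if n = z then Inf2 else One2) s \<noteq> eval2 (\<lambda>n. if n = z then Inf2 else One2) t"
    by metis
  with assms show False
    unfolding Th_M2_iff by blast
qed

text \<open>\<open>M\<^sub>2\<close> is isomorphic to the subalgebra \<open>{1, \<infinity>}\<close> of \<open>S\<^sub>7\<close>.\<close>
fun m2_of_s7 :: "s7 \<Rightarrow> m2" where
  "m2_of_s7 One7 = One2"
| "m2_of_s7 _ = Inf2"

lemma Th_S7_subset_Th_M2: "Th_S7 \<subseteq> Th_M2"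
proof -
  let ?C = "{One7, Inf7}"
  have "subalg ?C add7 mul7"
    by (auto simp: subalg_def add7.simps)
  moreover have "hom_on ?C add7 mul7 add2 mul2 m2_of_s7"
    by (auto simp: hom_on_def add7.simps)
  moreover have "UNIV \<subseteq> m2_of_s7 ` ?C"
    using m2.exhaust by auto
  ultimately have "Id_alg_on ?C add7 mul7 \<subseteq> Id_alg_on UNIV add2 mul2"
    by (rule Id_alg_on_hom_image)
  then show ?thesis
    using Id_alg_on_antimono[of ?C UNIV add7 mul7]
    unfolding Th_S7_def Th_M2_def Id_alg_eq_Id_alg_on_UNIV by blast
qed

section \<open>A quotient of a power of \<open>S\<^sub>7\<close> lying in \<open>N\<close>\<close>

text \<open>\<open>supp7\<close> maps a vector in \<open>S\<^sub>7\<^sup>\<nat>\<close> to \<open>None\<close> if it has an entry \<open>\<infinity>\<close>, and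
  otherwise to the set of positions of \<open>a\<close>; it is a homomorphism onto the algebra below.
  The unit \<open>Some {}\<close> is the image of the constant vector \<open>1\<close> only; without it,
  \<open>x\<^sup>2 = None\<close> for every element, so \<open>x\<^sup>2y \<approx> x\<^sup>2\<close> holds.\<close>

fun add_supp :: "nat set option \<Rightarrow> nat set option \<Rightarrow> nat set option" where
  "add_supp (Some S) (Some T) = (if S = T then Some S else None)"
| "add_supp _ _ = None"

fun mul_supp :: "nat set option \<Rightarrow> nat set option \<Rightarrow> nat set option" where
  "mul_supp (Some S) (Some T) = (if S \<inter> T = {} then Some (S \<union> T) else None)"
| "mul_supp _ _ = None"

definition supp7 :: "(nat \<Rightarrow> s7) \<Rightarrow> nat set option" where
  "supp7 v = (if \<exists>e. v e = Inf7 then None else Some {e. v e = A7})"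

lemma add_supp_None [simp]: "add_supp x None = None"
  and mul_supp_None [simp]: "mul_supp x None = None"
  by (cases x; simp)+

lemma supp7_eq_None_iff: "supp7 v = None \<longleftrightarrow> (\<exists>e. v e = Inf7)"
  by (simp add: supp7_def)

lemma s7_neq_Inf7: "x \<noteq> Inf7 \<longleftrightarrow> x = One7 \<or> x = A7"
  by (cases x) auto

lemma supp7_pw_add7: "supp7 (pw add7 u v) = add_supp (supp7 u) (supp7 v)"
proof (cases "\<exists>e. u e = Inf7 \<or> v e = Inf7")
  case True
  then obtain e where "u e = Inf7 \<or> v e = Inf7"
    by blast
  moreover from this have "pw add7 u v e = Inf7"
    by (auto simp: pw_def)
  ultimately have "supp7 (pw add7 u v) = None" "supp7 u = None \<or> supp7 v = None"
    unfolding supp7_eq_None_iff by blast+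
  then show ?thesis
    by auto
next
  case False
  then have supp: "supp7 u = Some {e. u e = A7}" "supp7 v = Some {e. v e = A7}"
    by (auto simp: supp7_def)
  show ?thesis
  proof (cases "u = v")
    case False
    then obtain e where e: "u e \<noteq> v e"
      by blast
    then have "pw add7 u v e = Inf7"
      by (simp add: pw_def add7_neq)
    then have "supp7 (pw add7 u v) = None"
      unfolding supp7_eq_None_iff by blast
    moreover have "u e = A7 \<longleftrightarrow> v e \<noteq> A7"
      using e \<open>\<not> (\<exists>e. u e = Inf7 \<or> v e = Inf7)\<close> by (metis s7_neq_Inf7)
    then have "{e. u e = A7} \<noteq> {e. v e = A7}"
      by blast
    ultimately show ?thesis
      by (simp add: supp)
  qed (simp add: supp pw_def)
qed

lemma supp7_pw_mul7: "supp7 (pw mul7 u v) = mul_supp (supp7 u) (supp7 v)"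
proof (cases "\<exists>e. u e = Inf7 \<or> v e = Inf7")
  case True
  then obtain e where "u e = Inf7 \<or> v e = Inf7"
    by blast
  moreover from this have "pw mul7 u v e = Inf7"
    by (auto simp: pw_def)
  ultimately have "supp7 (pw mul7 u v) = None" "supp7 u = None \<or> supp7 v = None"
    unfolding supp7_eq_None_iff by blast+
  then show ?thesis
    by auto
next
  case False
  then have supp: "supp7 u = Some {e. u e = A7}" "supp7 v = Some {e. v e = A7}"
    by (auto simp: supp7_def)
  have mul: "pw mul7 u v e =
      (if u e = A7 \<and> v e = A7 then Inf7 else if u e = A7 \<or> v e = A7 then A7 else One7)" for e
    using False by (cases "u e"; cases "v e") (auto simp: pw_def)
  show ?thesis
  proof (cases "{e. u e = A7} \<inter> {e. v e = A7} = {}")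
    case True
    then have "supp7 (pw mul7 u v) = Some ({e. u e = A7} \<union> {e. v e = A7})"
      by (auto simp: supp7_def mul)
    then show ?thesis
      using True by (simp add: supp)
  next
    case False
    then have "supp7 (pw mul7 u v) = None"
      by (auto simp: supp7_eq_None_iff mul)
    then show ?thesis
      using False by (simp add: supp)
  qed
qed

abbreviation one_vec :: "nat \<Rightarrow> s7" where "one_vec \<equiv> \<lambda>_. One7"

definition Th_supp :: "identity set" where
  "Th_supp = Id_alg_on (- {Some {}}) add_supp mul_supp"

lemma subalg_supp: "subalg (- {Some {}}) add_supp mul_supp"
proof -
  have "add_supp x y \<noteq> Some {}" "mul_supp x y \<noteq> Some {}" if "x \<noteq> Some {}" "y \<noteq> Some {}" for x y
    using that by (cases x; cases y; auto)+
  then show ?thesis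
    by (simp add: subalg_def)
qed

lemma eq_theory_Th_supp: "eq_theory Th_supp"
  unfolding Th_supp_def by (rule eq_theory_Id_alg_on[OF subalg_supp])

lemma subalg_nonunit: "subalg (- {one_vec}) (pw add7) (pw mul7)"
  by (auto simp: subalg_def pw_def fun_eq_iff add7_eq_One7_iff mul7_eq_One7_iff)

lemma hom_on_supp7: "hom_on C (pw add7) (pw mul7) add_supp mul_supp supp7"
  by (simp add: hom_on_def supp7_pw_add7 supp7_pw_mul7)

lemma supp7_nonunit: "v \<noteq> one_vec \<Longrightarrow> supp7 v \<noteq> Some {}"
  by (auto simp: supp7_def fun_eq_iff s7_neq_Inf7)

lemma supp7_image_nonunit: "supp7 ` (- {one_vec}) = - {Some {}}"
proof
  show "- {Some {}} \<subseteq> supp7 ` (- {one_vec})"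
  proof
    fix b :: "nat set option" assume b: "b \<in> - {Some {}}"
    show "b \<in> supp7 ` (- {one_vec})"
    proof (cases b)
      case None
      then have "b = supp7 (\<lambda>_. Inf7)"
        by (simp add: supp7_def)
      then show ?thesis
        by (auto simp: fun_eq_iff)
    next
      case (Some S)
      then obtain e where "e \<in> S"
        using b by auto
      then have "(\<lambda>e. if e \<in> S then A7 else One7) \<noteq> one_vec"
        by (auto simp: fun_eq_iff)
      moreover have "b = supp7 (\<lambda>e. if e \<in> S then A7 else One7)"
        using Some by (simp add: supp7_def)
      ultimately show ?thesis
        by blast
    qed
  qed
qed (intro image_subsetI, simp add: supp7_nonunit)

lemma Th_S7_subset_Th_supp: "Th_S7 \<subseteq> Th_supp"
proof -
  have "Th_S7 \<subseteq> Id_alg_on (UNIV :: (nat \<Rightarrow> s7) set) (pw add7) (pw mul7)"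
    using Id_alg_subset_Id_alg_pw unfolding Th_S7_def Id_alg_eq_Id_alg_on_UNIV .
  also have "\<dots> \<subseteq> Id_alg_on (- {one_vec}) (pw add7) (pw mul7)"
    by (rule Id_alg_on_antimono) simp
  also have "\<dots> \<subseteq> Th_supp"
    unfolding Th_supp_def
    by (rule Id_alg_on_hom_image[OF subalg_nonunit hom_on_supp7]) (simp add: supp7_image_nonunit)
  finally show ?thesis .
qed

abbreviation X :: trm where "X \<equiv> V 0"
abbreviation Y :: trm where "Y \<equiv> V 1"
abbreviation sq :: "trm \<Rightarrow> trm" where "sq u \<equiv> Times u u"

lemma Th_N_subset_Th_supp: "Th_N \<subseteq> Th_supp"
proof -
  have "(Times (sq X) Y, sq X) \<in> Th_supp"
    unfolding Th_supp_def Id_alg_on_def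
  proof clarify
    fix \<sigma> :: "nat \<Rightarrow> nat set option"
    assume "range \<sigma> \<subseteq> - {Some {}}"
    then have "\<sigma> 0 \<noteq> Some {}"
      by (metis ComplD rangeI singletonI subsetD)
    then have "mul_supp (\<sigma> 0) (\<sigma> 0) = None"
      by (cases "\<sigma> 0") auto
    then show "eval add_supp mul_supp \<sigma> (Times (sq X) Y) = eval add_supp mul_supp \<sigma> (sq X)"
      by simp
  qed
  then show ?thesis
    unfolding Th_N_def
    by (intro eq_closure_least eq_theory_Th_supp) (use Th_S7_subset_Th_supp in auto)
qed

lemma supp7_eval_eq:
  assumes "(P, Q) \<in> Th_supp" and \<sigma>: "\<And>n. n \<in> vars P \<union> vars Q \<Longrightarrow> \<sigma> n \<noteq> one_vec"
  shows "supp7 (\<lambda>e. eval7 (\<lambda>n. \<sigma> n e) P) = supp7 (\<lambda>e. eval7 (\<lambda>n. \<sigma> n e) Q)"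
proof -
  define \<sigma>' where "\<sigma>' n = (if n \<in> vars P \<union> vars Q then \<sigma> n else (\<lambda>_. Inf7))" for n
  have nonunit: "\<sigma>' n \<noteq> one_vec" for n
    using \<sigma>[of n] by (auto simp: \<sigma>'_def fun_eq_iff)
  then have "range \<sigma>' \<subseteq> - {one_vec}"
    by (metis ComplI image_subset_iff singletonD)
  then have "supp7 (eval (pw add7) (pw mul7) \<sigma>' P) = supp7 (eval (pw add7) (pw mul7) \<sigma>' Q)"
    using hom_on_eval_eq[OF subalg_nonunit hom_on_supp7] assms(1) supp7_image_nonunit
    unfolding Th_supp_def by blast
  moreover have "eval (pw add7) (pw mul7) \<sigma>' t = (\<lambda>e. eval7 (\<lambda>n. \<sigma> n e) t)"
    if "t = P \<or> t = Q" for t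
    using that by (auto simp: fun_eq_iff eval_pw \<sigma>'_def intro: eval_cong)
  ultimately show ?thesis
    by simp
qed

text \<open>Equivalently, \<open>P \<approx> x\<^sup>2P\<close> holds in \<open>S\<^sub>7\<close> for some variable \<open>x\<close> of \<open>P\<close>.\<close>
definition collapsing :: "trm \<Rightarrow> bool" where
  "collapsing P \<longleftrightarrow> (\<exists>x\<in>vars P. \<forall>\<sigma>. \<sigma> x \<noteq> One7 \<longrightarrow> eval7 \<sigma> P = Inf7)"

lemma not_collapsing_witnesses:
  assumes "\<not> collapsing P"
  obtains w where "\<And>x. x \<in> vars P \<Longrightarrow> w x x = A7"
    and "\<And>x. x \<in> vars P \<Longrightarrow> eval7 (w x) P = A7"
proof -
  from assms have "\<forall>x\<in>vars P. \<exists>\<sigma>. \<sigma> x \<noteq> One7 \<and> eval7 \<sigma> P \<noteq> Inf7"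
    by (auto simp: collapsing_def)
  then obtain w where w: "\<And>x. x \<in> vars P \<Longrightarrow> w x x \<noteq> One7 \<and> eval7 (w x) P \<noteq> Inf7"
    by metis
  have no_Inf7: "w x n \<noteq> Inf7" if "x \<in> vars P" "n \<in> vars P" for x n
    using w[OF that(1)] eval7_Inf7[OF that(2)] by blast
  have "w x x = A7" if "x \<in> vars P" for x
    using w[OF that] no_Inf7[OF that that] by (cases "w x x") auto
  moreover have "eval7 (w x) P = A7" if "x \<in> vars P" for x
  proof -
    have "eval7 (w x) P \<noteq> One7"
      using w[OF that] that eval7_eq_One7_iff by blast
    then show ?thesis
      using w[OF that] by (cases "eval7 (w x) P") auto
  qed
  ultimately show ?thesis
    using that by blast
qed

lemma supp7_fill:
  assumes "e0 \<notin> A"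
  shows "supp7 (\<lambda>e. if e \<in> A then A7 else c) = (case c of Inf7 \<Rightarrow> None | A7 \<Rightarrow> Some UNIV | One7 \<Rightarrow> Some A)"
  using assms by (cases c) (auto simp: supp7_def)

text \<open>The proof evaluates at vectors whose coordinate \<open>e \<in> vars P\<close> is the witness
  valuation \<open>w e\<close> and whose other coordinates are one arbitrary valuation \<open>\<rho>\<close>;
  a coordinate outside \<open>vars P\<close> makes the value at \<open>\<rho>\<close> visible in the support.\<close>
lemma Th_supp_not_collapsing:
  assumes PQ: "(P, Q) \<in> Th_supp" and vars: "vars Q = vars P" and "\<not> collapsing P"
  shows "(P, Q) \<in> Th_S7"
proof -
  obtain w where w_diag: "\<And>x. x \<in> vars P \<Longrightarrow> w x x = A7"
    and w_P: "\<And>x. x \<in> vars P \<Longrightarrow> eval7 (w x) P = A7"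
    using not_collapsing_witnesses[OF \<open>\<not> collapsing P\<close>] by blast
  obtain e0 where e0: "e0 \<notin> vars P"
    using finite_vars ex_new_if_finite infinite_UNIV_nat by blast
  define vec where "vec \<rho> t = (\<lambda>e. eval7 (if e \<in> vars P then w e else \<rho>) t)" for \<rho> t
  have supp_vec: "supp7 (vec \<rho> P) = supp7 (vec \<rho> Q)" for \<rho>
  proof -
    have "(\<lambda>e. (if e \<in> vars P then w e else \<rho>) n) \<noteq> one_vec" if "n \<in> vars P" for n
      using w_diag[OF that] that by (auto simp: fun_eq_iff intro!: exI[of _ n])
    then show ?thesis
      using supp7_eval_eq[OF PQ, of "\<lambda>n e. (if e \<in> vars P then w e else \<rho>) n"] vars
      by (simp add: vec_def)
  qed
  have vec_P: "vec \<rho> P = (\<lambda>e. if e \<in> vars P then A7 else eval7 \<rho> P)" for \<rho>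
    by (auto simp: vec_def w_P)
  have "eval7 one_vec P = One7"
    by (simp add: eval7_eq_One7_iff)
  then have "supp7 (vec one_vec Q) = Some (vars P)"
    using supp_vec[of one_vec] supp7_fill[OF e0] by (simp add: vec_P)
  then have "eval7 (w x) Q = A7" if "x \<in> vars P" for x
    using that by (auto simp: supp7_def vec_def split: if_splits)
  then have vec_Q: "vec \<rho> Q = (\<lambda>e. if e \<in> vars P then A7 else eval7 \<rho> Q)" for \<rho>
    by (auto simp: vec_def)
  have "eval7 \<rho> P = eval7 \<rho> Q" for \<rho>
    using supp_vec[of \<rho>] e0 unfolding vec_P vec_Q supp7_fill[OF e0]
    by (cases "eval7 \<rho> P"; cases "eval7 \<rho> Q") auto
  then show ?thesis
    by (simp add: Th_S7_iff)
qed

lemma Th_supp_dichotomy: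
  assumes "(P, Q) \<in> Th_supp" "vars P = vars Q"
  shows "(P, Q) \<in> Th_S7 \<or> (collapsing P \<and> collapsing Q)"
proof -
  have "(Q, P) \<in> Th_supp"
    using assms(1) eq_theory_Th_supp eq_theory_sym by blast
  then show ?thesis
    using Th_supp_not_collapsing assms by (metis Th_S7_iff)
qed

section \<open>Proper extensions of the equational theory of \<open>S\<^sub>7\<close>\<close>

fun relabel :: "s7 \<Rightarrow> s7 \<Rightarrow> s7" where
  "relabel c One7 = One7"
| "relabel c A7 = c"
| "relabel c Inf7 = mul7 c c"

lemma hom_on_relabel: "hom_on UNIV add7 mul7 add7 mul7 (relabel c)"
proof -
  have "relabel c (add7 x y) = add7 (relabel c x) (relabel c y)"
    and "relabel c (mul7 x y) = mul7 (relabel c x) (relabel c y)" for x y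
    by (cases c; cases x; cases y; simp add: add7.simps)+
  then show ?thesis
    by (simp add: hom_on_def)
qed

text \<open>The term \<open>x\<^sup>2y\<^sup>k\<close> for \<open>c = a\<^sup>k\<close> (\<open>k \<le> 2\<close>).\<close>
definition xsq_ypow :: "s7 \<Rightarrow> trm" where
  "xsq_ypow c = (case c of One7 \<Rightarrow> sq X | A7 \<Rightarrow> Times (sq X) Y | Inf7 \<Rightarrow> Times (sq X) (sq Y))"

lemma eval7_xsq_ypow: "eval7 \<mu> (xsq_ypow c) = mul7 (mul7 (\<mu> 0) (\<mu> 0)) (relabel (\<mu> 1) c)"
  by (cases c) (simp_all add: xsq_ypow_def)

lemma Th_S7_sq_X_times_subst:
  assumes "\<And>n. \<rho> n \<noteq> Inf7"
  shows "(Times (sq X) (subst (\<lambda>n. if \<rho> n = A7 then Y else X) s), xsq_ypow (eval7 \<rho> s)) \<in> Th_S7"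
proof -
  have "eval7 \<mu> (Times (sq X) (subst (\<lambda>n. if \<rho> n = A7 then Y else X) s)) = eval7 \<mu> (xsq_ypow (eval7 \<rho> s))"
    for \<mu>
  proof (cases "\<mu> 0 = One7")
    case True
    moreover have "\<rho> n = One7 \<or> \<rho> n = A7" for n
      using assms s7_neq_Inf7 by blast
    ultimately have "(\<lambda>n. eval7 \<mu> (if \<rho> n = A7 then Y else X)) = relabel (\<mu> 1) \<circ> \<rho>"
      by (force simp: fun_eq_iff)
    then show ?thesis
      using True eval_hom_on[OF subalg_UNIV hom_on_relabel]
      by (simp add: eval_subst eval7_xsq_ypow)
  qed (simp add: eval7_xsq_ypow mul7_self)
  then show ?thesis
    by (simp add: Th_S7_iff)
qed

abbreviation x2y_x2y2 :: identity where
  "x2y_x2y2 \<equiv> (Times (sq X) Y, Times (sq X) (sq Y))"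

lemma x2y_x2y2_if_xsq_ypow_eq:
  assumes T: "eq_theory T" "Th_S7 \<subseteq> T" and "(xsq_ypow c, xsq_ypow d) \<in> T" "c \<noteq> d"
  shows "x2y_x2y2 \<in> T"
proof -
  have from_x2y2: "x2y_x2y2 \<in> T" if "(sq X, Times (sq X) (sq Y)) \<in> T"
  proof -
    have "(Times (sq X) Y, Times (Times (sq X) (sq Y)) Y) \<in> T"
      using that eq_theory_Times[OF T(1)] eq_theory_refl[OF T(1)] by blast
    moreover have "(Times (Times (sq X) (sq Y)) Y, Times (sq X) (sq Y)) \<in> Th_S7"
      unfolding Th_S7_iff
    proof
      fix \<mu> :: "nat \<Rightarrow> s7"
      show "eval7 \<mu> (Times (Times (sq X) (sq Y)) Y) = eval7 \<mu> (Times (sq X) (sq Y))"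
        by (cases "\<mu> 0"; cases "\<mu> 1") simp_all
    qed
    ultimately show ?thesis
      using T(2) eq_theory_trans[OF T(1)] by blast
  qed
  have from_x2y: "x2y_x2y2 \<in> T" if "(sq X, Times (sq X) Y) \<in> T"
    using eq_theory_subst[OF T(1) that, of "\<lambda>n. if n = 1 then sq Y else V n"] from_x2y2 by simp
  have "(xsq_ypow d, xsq_ypow c) \<in> T"
    using assms(3) eq_theory_sym[OF T(1)] by blast
  then show ?thesis
    using assms(3,4) from_x2y from_x2y2
    by (cases c; cases d) (simp_all add: xsq_ypow_def)
qed

lemma Inf7_free_separating_valuation:
  assumes "(s, t) \<notin> Th_S7"
  obtains \<rho> where "\<And>n. \<rho> n \<noteq> Inf7" "eval7 \<rho> s \<noteq> eval7 \<rho> t"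
proof (cases "vars s = vars t")
  case True
  obtain \<rho> where \<rho>: "eval7 \<rho> s \<noteq> eval7 \<rho> t"
    using assms by (auto simp: Th_S7_iff)
  have "\<rho> n \<noteq> Inf7" if "n \<in> vars s" for n
  proof
    assume "\<rho> n = Inf7"
    then have "eval7 \<rho> s = Inf7" "eval7 \<rho> t = Inf7"
      using eval7_Inf7 that True by blast+
    with \<rho> show False
      by simp
  qed
  then have "eval7 (\<lambda>n. if \<rho> n = Inf7 then One7 else \<rho> n) u = eval7 \<rho> u" if "vars u = vars s" for u
    using that by (auto intro: eval_cong)
  then show ?thesis
    using that[of "\<lambda>n. if \<rho> n = Inf7 then One7 else \<rho> n"] \<rho> True by simp
next
  case False
  then obtain z where z: "z \<in> vars s \<longleftrightarrow> z \<notin> vars t"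
    by blast
  have "eval7 (\<lambda>n. if n = z then A7 else One7) u = One7 \<longleftrightarrow> z \<notin> vars u" for u
    by (auto simp: eval7_eq_One7_iff)
  then have "eval7 (\<lambda>n. if n = z then A7 else One7) s \<noteq> eval7 (\<lambda>n. if n = z then A7 else One7) t"
    using z by metis
  then show ?thesis
    using that[of "\<lambda>n. if n = z then A7 else One7"] by simp
qed

lemma x2y_x2y2_mem:
  assumes T: "eq_theory T" "Th_S7 \<subset> T"
  shows "x2y_x2y2 \<in> T"
proof -
  obtain s t where st: "(s, t) \<in> T" "(s, t) \<notin> Th_S7"
    using psubset_imp_ex_mem[OF T(2)] by auto
  obtain \<rho> where \<rho>: "\<And>n. \<rho> n \<noteq> Inf7" and sep: "eval7 \<rho> s \<noteq> eval7 \<rho> t"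
    using Inf7_free_separating_valuation[OF st(2)] by blast
  let ?\<tau> = "\<lambda>n. if \<rho> n = A7 then Y else X"
  have "(Times (sq X) (subst ?\<tau> s), Times (sq X) (subst ?\<tau> t)) \<in> T"
    using eq_theory_Times[OF T(1) eq_theory_refl[OF T(1)] eq_theory_subst[OF T(1) st(1)]] .
  moreover have "(Times (sq X) (subst ?\<tau> u), xsq_ypow (eval7 \<rho> u)) \<in> T" for u
    by (rule subsetD[OF psubset_imp_subset[OF T(2)] Th_S7_sq_X_times_subst[OF \<rho>]])
  ultimately have "(xsq_ypow (eval7 \<rho> s), xsq_ypow (eval7 \<rho> t)) \<in> T"
    using eq_theory_sym[OF T(1)] eq_theory_trans[OF T(1)] by metis
  with sep show ?thesis
    using x2y_x2y2_if_xsq_ypow_eq[OF T(1) psubset_imp_subset[OF T(2)]] by blast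
qed

lemma eval7_sq_var_times_sq:
  assumes "x \<in> vars P"
  shows "eval7 \<mu> (Times (sq (V x)) (sq P)) = (if \<forall>n\<in>vars P. \<mu> n = One7 then One7 else Inf7)"
proof (cases "\<forall>n\<in>vars P. \<mu> n = One7")
  case True
  then have "eval7 \<mu> P = One7" "\<mu> x = One7"
    using assms by (auto simp: eval7_eq_One7_iff)
  then show ?thesis
    using True by simp
next
  case False
  then have "mul7 (eval7 \<mu> P) (eval7 \<mu> P) = Inf7"
    by (simp add: eval7_eq_One7_iff mul7_self)
  then show ?thesis
    using False by simp
qed

lemma collapsing_eq_sq_var_times_sq:
  assumes T: "eq_theory T" "Th_S7 \<subseteq> T" "x2y_x2y2 \<in> T" and "collapsing P"
  obtains x where "x \<in> vars P" "(P, Times (sq (V x)) (sq P)) \<in> T"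
proof -
  obtain x where x: "x \<in> vars P" and Inf7: "\<And>\<sigma>. \<sigma> x \<noteq> One7 \<Longrightarrow> eval7 \<sigma> P = Inf7"
    using \<open>collapsing P\<close> by (auto simp: collapsing_def)
  have "(P, Times (sq (V x)) P) \<in> Th_S7"
    unfolding Th_S7_iff
  proof
    fix \<sigma> :: "nat \<Rightarrow> s7"
    show "eval7 \<sigma> P = eval7 \<sigma> (Times (sq (V x)) P)"
      using Inf7[of \<sigma>] mul7_self[of "\<sigma> x"] by (cases "\<sigma> x = One7") simp_all
  qed
  moreover have "(Times (sq (V x)) P, Times (sq (V x)) (sq P)) \<in> T"
    using eq_theory_subst[OF T(1,3), of "\<lambda>n. if n = 0 then V x else P"] by simp
  ultimately show ?thesis
    using that[OF x] T(2) eq_theory_trans[OF T(1)] by blast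
qed

lemma collapsing_mem:
  assumes T: "eq_theory T" "Th_S7 \<subseteq> T" "x2y_x2y2 \<in> T"
    and "collapsing P" "collapsing Q" "vars P = vars Q"
  shows "(P, Q) \<in> T"
proof -
  obtain x where x: "x \<in> vars P" "(P, Times (sq (V x)) (sq P)) \<in> T"
    using collapsing_eq_sq_var_times_sq[OF T \<open>collapsing P\<close>] .
  obtain z where z: "z \<in> vars Q" "(Q, Times (sq (V z)) (sq Q)) \<in> T"
    using collapsing_eq_sq_var_times_sq[OF T \<open>collapsing Q\<close>] .
  have "(Times (sq (V x)) (sq P), Times (sq (V z)) (sq Q)) \<in> Th_S7"
    unfolding Th_S7_iff using eval7_sq_var_times_sq[OF x(1)] eval7_sq_var_times_sq[OF z(1)] \<open>vars P = vars Q\<close>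
    by simp
  then show ?thesis
    using x(2) eq_theory_sym[OF T(1) z(2)] T(2) eq_theory_trans[OF T(1)] by blast
qed

lemma eq_theory_Th_M2: "eq_theory Th_M2"
  unfolding Th_M2_def Id_alg_eq_Id_alg_on_UNIV by (rule eq_theory_Id_alg_on[OF subalg_UNIV])

lemma eq_theory_Th_N: "eq_theory Th_N"
  unfolding Th_N_def by (rule eq_theory_eq_closure)

lemma Th_S7_subset_Th_N: "Th_S7 \<subseteq> Th_N"
  and x2y_x2_mem_Th_N: "(Times (sq X) Y, sq X) \<in> Th_N"
  unfolding Th_N_def using eq_closure_subset by blast+

lemma x2y_plus_x2_mem: "(Plus (Times (sq X) Y) (sq X), Times (sq X) Y) \<in> Th_join - Th_S7"
proof -
  have "(Plus (Times (sq X) Y) (sq X), Plus (sq X) (sq X)) \<in> Th_N"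
    using eq_theory_Plus[OF eq_theory_Th_N x2y_x2_mem_Th_N eq_theory_refl[OF eq_theory_Th_N]] .
  moreover have "(Plus (sq X) (sq X), sq X) \<in> Th_N"
    using Th_S7_subset_Th_N by (auto simp: Th_S7_iff)
  moreover have "(sq X, Times (sq X) Y) \<in> Th_N"
    using eq_theory_sym[OF eq_theory_Th_N x2y_x2_mem_Th_N] .
  ultimately have "(Plus (Times (sq X) Y) (sq X), Times (sq X) Y) \<in> Th_N"
    using eq_theory_trans[OF eq_theory_Th_N] by blast
  moreover have "(Plus (Times (sq X) Y) (sq X), Times (sq X) Y) \<in> Th_M2"
    unfolding Th_M2_iff
  proof
    fix \<mu> :: "nat \<Rightarrow> m2"
    show "eval2 \<mu> (Plus (Times (sq X) Y) (sq X)) = eval2 \<mu> (Times (sq X) Y)"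
      by (cases "\<mu> 0"; cases "\<mu> 1") simp_all
  qed
  moreover have "(Plus (Times (sq X) Y) (sq X), Times (sq X) Y) \<notin> Th_S7"
  proof -
    let ?\<rho> = "\<lambda>n. if n = 0 then One7 else A7"
    have "eval7 ?\<rho> (Plus (Times (sq X) Y) (sq X)) \<noteq> eval7 ?\<rho> (Times (sq X) Y)"
      by (simp add: add7_neq)
    then show ?thesis
      unfolding Th_S7_iff by blast
  qed
  ultimately show ?thesis
    by (simp add: Th_join_def)
qed

theorem proposition3p14:
  shows "eq_theory Th_join \<and> Th_S7 \<subset> Th_join \<and>
         (\<forall>T. eq_theory T \<and> Th_S7 \<subset> T \<longrightarrow> Th_join \<subseteq> T)"
proof (intro conjI allI impI)
  show "eq_theory Th_join"
    unfolding Th_join_def by (rule eq_theory_Int[OF eq_theory_Th_M2 eq_theory_Th_N])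
  have "Th_S7 \<subseteq> Th_join"
    using Th_S7_subset_Th_M2 Th_S7_subset_Th_N by (simp add: Th_join_def)
  then show "Th_S7 \<subset> Th_join"
    using x2y_plus_x2_mem by auto
next
  fix T assume "eq_theory T \<and> Th_S7 \<subset> T"
  then have T: "eq_theory T" "Th_S7 \<subseteq> T" "x2y_x2y2 \<in> T"
    using x2y_x2y2_mem by auto
  show "Th_join \<subseteq> T"
  proof clarify
    fix P Q assume PQ: "(P, Q) \<in> Th_join"
    then have vars: "vars P = vars Q"
      by (simp add: Th_join_def Th_M2_vars_eq)
    moreover have "(P, Q) \<in> Th_supp"
      using PQ Th_N_subset_Th_supp by (auto simp: Th_join_def)
    ultimately consider "(P, Q) \<in> Th_S7" | "collapsing P" "collapsing Q"
      using Th_supp_dichotomy by blast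
    then show "(P, Q) \<in> T"
      using T(2) collapsing_mem[OF T _ _ vars] by cases auto
  qed
qed

end
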